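(* Consider a Gaussian relay network on a finite directed acyclic graph with a source node $S$, a destination node $D$ and relay nodes, as described in the context. Suppose the source transmits a zero-mean signal $x_S$ with $E[x_S^2]\le P_S^{Up}$, independent of all noises, and each relay node $k$ transmits $x_k=\beta_k y_k$ with a real amplification gain $\beta_k$ satisfying $$\beta_k^2\le \frac{P_k^{Up}}{(1+\delta_k)P_{R,k}}.$$ Then every relay node $k$ satisfies its power constraint $E[x_k^2]\le P_k^{Up}$.
   Context: Each non-source node $k$ has a set $\mathcal V(k)$ of in-neighbours (nodes with an edge into $k$) and receives $y_k=\sum_{j\in\mathcal V(k)}h_{j,k}x_j+z_k$, where the channel gains $h_{j,k}$ are fixed positive real constants, $x_j$ is the signal transmitted by node $j$, and the noises $z_k\sim\mathcal N(0,1)$ are independent across nodes and independent of $x_S$. Relays operate instantaneously (amplify-and-forward without delay). Every node $j$ (source or relay) has a transmit-power bound $P_j^{Up}>0$. For each non-source node $k$ with $\mathcal V(k)\neq\emptyset$ define $P_{R,k}=\big(\sum_{j\in\mathcal V(k)}h_{j,k}\sqrt{P_j^{Up}}\big)^2$ and $\delta_k=1/P_{R,k}$. *)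

theory Defs
  imports "HOL-Probability.Probability"
begin

definition in_nbrs :: "('a \<times> 'a) set \<Rightarrow> 'a \<Rightarrow> 'a set" where
  "in_nbrs E k = {j. (j, k) \<in> E}"

definition P_R :: "('a \<times> 'a) set \<Rightarrow> ('a \<Rightarrow> 'a \<Rightarrow> real) \<Rightarrow> ('a \<Rightarrow> real) \<Rightarrow> 'a \<Rightarrow> real" where
  "P_R E h Pup k = (\<Sum>j\<in>in_nbrs E k. h j k * sqrt (Pup j))\<^sup>2"

definition delta :: "('a \<times> 'a) set \<Rightarrow> ('a \<Rightarrow> 'a \<Rightarrow> real) \<Rightarrow> ('a \<Rightarrow> real) \<Rightarrow> 'a \<Rightarrow> real" where
  "delta E h Pup k = 1 / P_R E h Pup k"

end

theory Submission
  imports Defs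
begin

text \<open>Every transmitted signal is a measurable function of the source signal and of the noises
  at its ancestors in the acyclic graph. Hence the noise \<open>z\<^sub>k\<close> is independent of the incoming
  signal \<open>A\<^sub>k = \<Sum>\<^sub>j h\<^sub>j\<^sub>k x\<^sub>j\<close> of relay \<open>k\<close>, and \<open>E[y\<^sub>k\<^sup>2] = E[A\<^sub>k\<^sup>2] + 1\<close>. Arguing by
  well-founded induction along the graph, the in-neighbours of \<open>k\<close> obey their power constraints,
  so Minkowski's inequality in \<open>L\<^sup>2\<close> gives \<open>E[A\<^sub>k\<^sup>2] \<le> P\<^sub>R\<^sub>,\<^sub>k\<close>; since
  \<open>(1 + \<delta>\<^sub>k) P\<^sub>R\<^sub>,\<^sub>k = P\<^sub>R\<^sub>,\<^sub>k + 1\<close>, the gain condition then yields \<open>E[x\<^sub>k\<^sup>2] \<le> P\<^sub>k\<close>.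
  Only the noise has to be centred.\<close>

context prob_space
begin

definition square_integrable :: "('a \<Rightarrow> real) \<Rightarrow> bool" where
  "square_integrable f \<longleftrightarrow> f \<in> borel_measurable M \<and> integrable M (\<lambda>\<omega>. (f \<omega>)\<^sup>2)"

lemma square_integrable_imp_integrable_mult:
  assumes "square_integrable f" "square_integrable g"
  shows "integrable M (\<lambda>\<omega>. f \<omega> * g \<omega>)"
proof (rule Bochner_Integration.integrable_bound)
  show "integrable M (\<lambda>\<omega>. (f \<omega>)\<^sup>2 + (g \<omega>)\<^sup>2)"
    using assms by (auto simp: square_integrable_def)
  show "(\<lambda>\<omega>. f \<omega> * g \<omega>) \<in> borel_measurable M"
    using assms by (auto simp: square_integrable_def)
  have "\<bar>f \<omega> * g \<omega>\<bar> \<le> (f \<omega>)\<^sup>2 + (g \<omega>)\<^sup>2" for \<omega>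
    unfolding abs_mult using sum_squares_bound[of "\<bar>f \<omega>\<bar>" "\<bar>g \<omega>\<bar>"]
      mult_nonneg_nonneg[OF abs_ge_zero abs_ge_zero, of "f \<omega>" "g \<omega>"]
    unfolding power2_abs by linarith
  then show "AE \<omega> in M. norm (f \<omega> * g \<omega>) \<le> norm ((f \<omega>)\<^sup>2 + (g \<omega>)\<^sup>2)"
    by simp
qed

lemma square_integrable_integrable: "square_integrable f \<Longrightarrow> integrable M f"
  unfolding square_integrable_def by (blast intro: square_integrable_imp_integrable)

lemma square_integrable_const [simp]: "square_integrable (\<lambda>_. c)"
  by (simp add: square_integrable_def)

lemma square_integrable_add:
  assumes "square_integrable f" "square_integrable g"
  shows "square_integrable (\<lambda>\<omega>. f \<omega> + g \<omega>)"
proof -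
  have "(\<lambda>\<omega>. (f \<omega> + g \<omega>)\<^sup>2) = (\<lambda>\<omega>. (f \<omega>)\<^sup>2 + 2 * (f \<omega> * g \<omega>) + (g \<omega>)\<^sup>2)"
    by (simp add: power2_sum algebra_simps)
  then show ?thesis
    using assms square_integrable_imp_integrable_mult[OF assms]
    by (auto simp: square_integrable_def)
qed

lemma square_integrable_cmult:
  assumes "square_integrable f"
  shows "square_integrable (\<lambda>\<omega>. c * f \<omega>)"
  using assms by (auto simp: square_integrable_def power_mult_distrib)

lemma square_integrable_sum:
  "finite A \<Longrightarrow> (\<And>j. j \<in> A \<Longrightarrow> square_integrable (f j)) \<Longrightarrow>
    square_integrable (\<lambda>\<omega>. \<Sum>j\<in>A. f j \<omega>)"
  by (induction A rule: finite_induct) (auto intro!: square_integrable_add)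

lemma expectation_square_affine:
  assumes "square_integrable f" "square_integrable g"
  shows "expectation (\<lambda>\<omega>. (s * f \<omega> + g \<omega>)\<^sup>2) =
    s\<^sup>2 * expectation (\<lambda>\<omega>. (f \<omega>)\<^sup>2) + 2 * s * expectation (\<lambda>\<omega>. f \<omega> * g \<omega>)
      + expectation (\<lambda>\<omega>. (g \<omega>)\<^sup>2)"
proof -
  have "(\<lambda>\<omega>. (s * f \<omega> + g \<omega>)\<^sup>2) =
      (\<lambda>\<omega>. s\<^sup>2 * (f \<omega>)\<^sup>2 + (2 * s) * (f \<omega> * g \<omega>) + (g \<omega>)\<^sup>2)"
    by (simp add: power2_sum power_mult_distrib algebra_simps)
  then show ?thesis
    using assms square_integrable_imp_integrable_mult[OF assms]
    by (simp add: square_integrable_def)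
qed

text \<open>The quadratic \<open>s \<mapsto> E[(s f + g)\<^sup>2]\<close> is nonnegative, so its discriminant is not
  positive.\<close>

lemma Cauchy_Schwarz_expectation:
  assumes "square_integrable f" "square_integrable g"
  shows "expectation (\<lambda>\<omega>. f \<omega> * g \<omega>) \<le>
    sqrt (expectation (\<lambda>\<omega>. (f \<omega>)\<^sup>2)) * sqrt (expectation (\<lambda>\<omega>. (g \<omega>)\<^sup>2))"
proof -
  define A where "A = expectation (\<lambda>\<omega>. (f \<omega>)\<^sup>2)"
  define B where "B = expectation (\<lambda>\<omega>. (g \<omega>)\<^sup>2)"
  define C where "C = expectation (\<lambda>\<omega>. f \<omega> * g \<omega>)"
  have quadratic_nonneg: "s\<^sup>2 * A + 2 * s * C + B \<ge> 0" for s
    using expectation_square_affine[OF assms, of s]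
      integral_nonneg_AE[of "\<lambda>\<omega>. (s * f \<omega> + g \<omega>)\<^sup>2" M]
    by (simp add: A_def B_def C_def)
  have "A \<ge> 0" by (simp add: A_def)
  have "C\<^sup>2 \<le> A * B"
  proof (cases "A = 0")
    case True
    then have "C = 0"
      using quadratic_nonneg[of "- (B + 1) / (2 * C)"] by (cases "C = 0") (simp_all add: field_simps)
    then show ?thesis using True by simp
  next
    case False
    with \<open>A \<ge> 0\<close> have "A > 0" by simp
    with quadratic_nonneg[of "- C / A"] have "B - C\<^sup>2 / A \<ge> 0"
      by (simp add: power2_eq_square field_simps)
    with \<open>A > 0\<close> show ?thesis by (simp add: field_simps)
  qed
  then have "sqrt (C\<^sup>2) \<le> sqrt (A * B)" by (rule real_sqrt_le_mono)
  then show ?thesis by (simp add: A_def B_def C_def real_sqrt_mult)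
qed

lemma sqrt_expectation_square_add_le:
  assumes "square_integrable f" "square_integrable g"
  shows "sqrt (expectation (\<lambda>\<omega>. (f \<omega> + g \<omega>)\<^sup>2)) \<le>
    sqrt (expectation (\<lambda>\<omega>. (f \<omega>)\<^sup>2)) + sqrt (expectation (\<lambda>\<omega>. (g \<omega>)\<^sup>2))"
proof -
  define a where "a = sqrt (expectation (\<lambda>\<omega>. (f \<omega>)\<^sup>2))"
  define b where "b = sqrt (expectation (\<lambda>\<omega>. (g \<omega>)\<^sup>2))"
  have "expectation (\<lambda>\<omega>. (f \<omega> + g \<omega>)\<^sup>2) = a\<^sup>2 + 2 * expectation (\<lambda>\<omega>. f \<omega> * g \<omega>) + b\<^sup>2"
    using expectation_square_affine[OF assms, of 1] by (simp add: a_def b_def)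
  also have "\<dots> \<le> (a + b)\<^sup>2"
    using Cauchy_Schwarz_expectation[OF assms] by (simp add: a_def b_def power2_sum)
  finally show ?thesis
    using real_sqrt_le_mono by (fastforce simp: a_def b_def)
qed

lemma sqrt_expectation_square_sum_le:
  "finite A \<Longrightarrow> (\<And>j. j \<in> A \<Longrightarrow> square_integrable (f j)) \<Longrightarrow>
    sqrt (expectation (\<lambda>\<omega>. (\<Sum>j\<in>A. f j \<omega>)\<^sup>2)) \<le> (\<Sum>j\<in>A. sqrt (expectation (\<lambda>\<omega>. (f j \<omega>)\<^sup>2)))"
proof (induction A rule: finite_induct)
  case (insert a A)
  then have "sqrt (expectation (\<lambda>\<omega>. (f a \<omega> + (\<Sum>j\<in>A. f j \<omega>))\<^sup>2)) \<le>
      sqrt (expectation (\<lambda>\<omega>. (f a \<omega>)\<^sup>2)) + sqrt (expectation (\<lambda>\<omega>. (\<Sum>j\<in>A. f j \<omega>)\<^sup>2))"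
    by (intro sqrt_expectation_square_add_le square_integrable_sum) auto
  with insert show ?case by simp
qed simp

lemma square_integrable_std_normal:
  assumes "distributed M lborel Z std_normal_density"
  shows "square_integrable Z"
  using distributed_measurable[OF assms]
    distributed_integrable[OF assms, of "\<lambda>t. t\<^sup>2"] integrable_std_normal_moment[of 2]
  by (simp add: square_integrable_def)

lemma expectation_square_add_indep_std_normal:
  assumes "indep_var borel A borel Z" "square_integrable A"
    and Z: "distributed M lborel Z std_normal_density"
  shows "expectation (\<lambda>\<omega>. (A \<omega> + Z \<omega>)\<^sup>2) = expectation (\<lambda>\<omega>. (A \<omega>)\<^sup>2) + 1"
proof -
  have "expectation Z = 0" "variance Z = 1"
    using standard_normal_distributed_expectation[OF Z] standard_normal_distributed_variance[OF Z] .
  moreover have "expectation (\<lambda>\<omega>. A \<omega> * Z \<omega>) = expectation A * expectation Z"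
    using assms(1,2) square_integrable_std_normal[OF Z]
    by (intro indep_var_lebesgue_integral) (auto intro: square_integrable_integrable)
  ultimately show ?thesis
    using expectation_square_affine[OF assms(2) square_integrable_std_normal[OF Z], of 1] by simp
qed

end

definition determined_by :: "('i \<Rightarrow> 'w \<Rightarrow> real) \<Rightarrow> 'i set \<Rightarrow> ('w \<Rightarrow> real) \<Rightarrow> bool" where
  "determined_by X T f \<longleftrightarrow>
    (\<exists>F \<in> borel_measurable (Pi\<^sub>M T (\<lambda>_. borel)). \<forall>\<omega>. f \<omega> = F (\<lambda>i\<in>T. X i \<omega>))"

lemma determined_by_mono:
  assumes "determined_by X T f" "T \<subseteq> T'"
  shows "determined_by X T' f"
proof -
  obtain F where F: "F \<in> borel_measurable (Pi\<^sub>M T (\<lambda>_. borel))" "\<And>\<omega>. f \<omega> = F (\<lambda>i\<in>T. X i \<omega>)"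
    using assms(1) by (auto simp: determined_by_def)
  have "(\<lambda>g. F (restrict g T)) \<in> borel_measurable (Pi\<^sub>M T' (\<lambda>_. borel))"
    using measurable_comp[OF measurable_restrict_subset[OF assms(2)] F(1)] by (simp add: comp_def)
  moreover have "restrict (\<lambda>i\<in>T'. X i \<omega>) T = (\<lambda>i\<in>T. X i \<omega>)" for \<omega>
    using assms(2) by (auto simp: fun_eq_iff)
  ultimately show ?thesis
    unfolding determined_by_def using F(2)
    by (intro bexI[of _ "\<lambda>g. F (restrict g T)"]) auto
qed

lemma determined_by_coordinate: "i \<in> T \<Longrightarrow> determined_by X T (X i)"
  unfolding determined_by_def
  by (intro bexI[of _ "\<lambda>g. g i"] measurable_component_singleton) auto

lemma determined_by_const: "determined_by X T (\<lambda>_. c)"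
  unfolding determined_by_def by (intro bexI[of _ "\<lambda>_. c"]) auto

lemma determined_by_binop:
  assumes "determined_by X T f" "determined_by X T g"
    and "(\<lambda>(a, b). op a b) \<in> borel_measurable (borel \<Otimes>\<^sub>M borel)"
  shows "determined_by X T (\<lambda>\<omega>. op (f \<omega>) (g \<omega>))"
proof -
  obtain F G where
    F: "F \<in> borel_measurable (Pi\<^sub>M T (\<lambda>_. borel))" "\<And>\<omega>. f \<omega> = F (\<lambda>i\<in>T. X i \<omega>)" and
    G: "G \<in> borel_measurable (Pi\<^sub>M T (\<lambda>_. borel))" "\<And>\<omega>. g \<omega> = G (\<lambda>i\<in>T. X i \<omega>)"
    using assms(1,2) by (auto simp: determined_by_def)
  have "(\<lambda>u. (F u, G u)) \<in> Pi\<^sub>M T (\<lambda>_. borel) \<rightarrow>\<^sub>M borel \<Otimes>\<^sub>M borel"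
    using F(1) G(1) by (rule measurable_Pair)
  then have "(\<lambda>u. case (F u, G u) of (a, b) \<Rightarrow> op a b) \<in> borel_measurable (Pi\<^sub>M T (\<lambda>_. borel))"
    using assms(3) by (rule measurable_compose)
  then show ?thesis
    unfolding determined_by_def using F(2) G(2)
    by (intro bexI[of _ "\<lambda>u. op (F u) (G u)"]) auto
qed

lemma determined_by_add:
  "determined_by X T f \<Longrightarrow> determined_by X T g \<Longrightarrow> determined_by X T (\<lambda>\<omega>. f \<omega> + g \<omega>)"
  by (rule determined_by_binop) auto

lemma determined_by_mult:
  "determined_by X T f \<Longrightarrow> determined_by X T g \<Longrightarrow> determined_by X T (\<lambda>\<omega>. f \<omega> * g \<omega>)"
  by (rule determined_by_binop) auto

lemma determined_by_cmult:
  "determined_by X T f \<Longrightarrow> determined_by X T (\<lambda>\<omega>. c * f \<omega>)"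
  by (rule determined_by_mult[OF determined_by_const])

lemma determined_by_sum:
  "finite A \<Longrightarrow> (\<And>j. j \<in> A \<Longrightarrow> determined_by X T (f j)) \<Longrightarrow>
    determined_by X T (\<lambda>\<omega>. \<Sum>j\<in>A. f j \<omega>)"
  by (induction A rule: finite_induct) (auto intro: determined_by_add determined_by_const)

lemma (in prob_space) indep_var_if_determined_by_disjoint:
  assumes "indep_vars (\<lambda>_. borel) X I" "T \<subseteq> I" "T' \<subseteq> I" "T \<inter> T' = {}"
    and "determined_by X T f" "determined_by X T' g"
  shows "indep_var borel f borel g"
proof -
  obtain F G where
    F: "F \<in> borel_measurable (Pi\<^sub>M T (\<lambda>_. borel))" "\<And>\<omega>. f \<omega> = F (\<lambda>i\<in>T. X i \<omega>)" and
    G: "G \<in> borel_measurable (Pi\<^sub>M T' (\<lambda>_. borel))" "\<And>\<omega>. g \<omega> = G (\<lambda>i\<in>T'. X i \<omega>)"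
    using assms(5,6) by (auto simp: determined_by_def)
  have "indep_var borel (F \<circ> (\<lambda>\<omega>. \<lambda>i\<in>T. X i \<omega>)) borel (G \<circ> (\<lambda>\<omega>. \<lambda>i\<in>T'. X i \<omega>))"
    using indep_var_restrict[OF assms(1,4,2,3)] F(1) G(1) by (rule indep_var_compose)
  moreover have "f = F \<circ> (\<lambda>\<omega>. \<lambda>i\<in>T. X i \<omega>)" "g = G \<circ> (\<lambda>\<omega>. \<lambda>i\<in>T'. X i \<omega>)"
    using F(2) G(2) by auto
  ultimately show ?thesis by simp
qed

locale af_relay_network = prob_space M
  for M :: "'w measure" +
  fixes V :: "'a set" and E :: "('a \<times> 'a) set" and S D :: 'a
    and h :: "'a \<Rightarrow> 'a \<Rightarrow> real" and Pup :: "'a \<Rightarrow> real" and \<beta> :: "'a \<Rightarrow> real"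
    and x y z :: "'a \<Rightarrow> 'w \<Rightarrow> real"
  assumes finite_V: "finite V" and edges: "E \<subseteq> V \<times> V" and dag: "acyclic E"
    and D_silent: "\<And>k. (D, k) \<notin> E"
    and h_pos: "\<And>j k. (j, k) \<in> E \<Longrightarrow> h j k > 0"
    and Pup_pos: "\<And>j. j \<in> V - {D} \<Longrightarrow> Pup j > 0"
    and relay_in: "\<And>k. k \<in> V - {S, D} \<Longrightarrow> in_nbrs E k \<noteq> {}"
    and xS_meas: "x S \<in> borel_measurable M"
    and xS_sq_int: "integrable M (\<lambda>\<omega>. (x S \<omega>)\<^sup>2)"
    and xS_pow: "expectation (\<lambda>\<omega>. (x S \<omega>)\<^sup>2) \<le> Pup S"
    and noise_dist: "\<And>k. k \<in> V - {S} \<Longrightarrow> distributed M lborel (z k) std_normal_density"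
    and indep: "indep_vars (\<lambda>_. borel)
      (\<lambda>i. case i of None \<Rightarrow> x S | Some k \<Rightarrow> z k) (insert None (Some ` (V - {S})))"
    and recv: "\<And>k. k \<in> V - {S} \<Longrightarrow> y k = (\<lambda>\<omega>. (\<Sum>j\<in>in_nbrs E k. h j k * x j \<omega>) + z k \<omega>)"
    and relay_tx: "\<And>k. k \<in> V - {S, D} \<Longrightarrow> x k = (\<lambda>\<omega>. \<beta> k * y k \<omega>)"
    and gain: "\<And>k. k \<in> V - {S, D} \<Longrightarrow>
      (\<beta> k)\<^sup>2 \<le> Pup k / ((1 + delta E h Pup k) * P_R E h Pup k)"
begin

definition primitive :: "'a option \<Rightarrow> 'w \<Rightarrow> real" where
  "primitive i = (case i of None \<Rightarrow> x S | Some k \<Rightarrow> z k)"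

lemma primitive_simps [simp]: "primitive None = x S" "primitive (Some k) = z k"
  by (simp_all add: primitive_def)

definition primitive_index :: "'a set \<Rightarrow> 'a option set" where
  "primitive_index A = insert None (Some ` (A - {S}))"

definition ancestors :: "'a \<Rightarrow> 'a set" where
  "ancestors k = {i \<in> V. (i, k) \<in> E\<^sup>*}"

definition proper_ancestors :: "'a \<Rightarrow> 'a set" where
  "proper_ancestors k = {i \<in> V. (i, k) \<in> E\<^sup>+}"

definition incoming :: "'a \<Rightarrow> 'w \<Rightarrow> real" where
  "incoming k = (\<lambda>\<omega>. \<Sum>j\<in>in_nbrs E k. h j k * x j \<omega>)"

lemma wf_E: "wf E"
  using finite_acyclic_wf[OF finite_subset[OF edges] dag] finite_V by blast

lemma in_nbrs_subset: "in_nbrs E k \<subseteq> V - {D}"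
  using edges D_silent by (auto simp: in_nbrs_def)

lemma finite_in_nbrs: "finite (in_nbrs E k)"
  using in_nbrs_subset finite_V by (meson finite_Diff finite_subset)

lemma x_relay: "k \<in> V - {S, D} \<Longrightarrow> x k = (\<lambda>\<omega>. \<beta> k * (incoming k \<omega> + z k \<omega>))"
  using relay_tx recv by (auto simp: incoming_def)

lemma indep_primitive: "indep_vars (\<lambda>_. borel) primitive (primitive_index V)"
  using indep by (simp add: primitive_def[abs_def] primitive_index_def)

lemma ancestors_subset_proper_ancestors:
  "j \<in> in_nbrs E k \<Longrightarrow> ancestors j \<subseteq> proper_ancestors k"
  by (auto simp: ancestors_def proper_ancestors_def in_nbrs_def intro: rtrancl_into_trancl1)

lemma noise_notin_proper_ancestors: "Some k \<notin> primitive_index (proper_ancestors k)"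
  using dag by (auto simp: primitive_index_def proper_ancestors_def acyclic_def)

lemma determined_by_incoming:
  assumes "\<And>j. j \<in> in_nbrs E k \<Longrightarrow> determined_by primitive (primitive_index (ancestors j)) (x j)"
  shows "determined_by primitive (primitive_index (proper_ancestors k)) (incoming k)"
  unfolding incoming_def
proof (rule determined_by_sum[OF finite_in_nbrs])
  fix j assume j: "j \<in> in_nbrs E k"
  have "primitive_index (ancestors j) \<subseteq> primitive_index (proper_ancestors k)"
    using ancestors_subset_proper_ancestors[OF j] by (auto simp: primitive_index_def)
  then have "determined_by primitive (primitive_index (proper_ancestors k)) (x j)"
    by (rule determined_by_mono[OF assms[OF j]])
  then show "determined_by primitive (primitive_index (proper_ancestors k)) (\<lambda>\<omega>. h j k * x j \<omega>)"
    by (rule determined_by_cmult)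
qed

lemma determined_by_x:
  "k \<in> V - {D} \<Longrightarrow> determined_by primitive (primitive_index (ancestors k)) (x k)"
proof (induction k rule: wf_induct_rule[OF wf_E])
  case (1 k)
  show ?case
  proof (cases "k = S")
    case True
    then show ?thesis
      using determined_by_coordinate[of None "primitive_index (ancestors k)" primitive]
      by (simp add: primitive_index_def)
  next
    case False
    with "1.prems" have relay: "k \<in> V - {S, D}" by blast
    have "determined_by primitive (primitive_index (proper_ancestors k)) (incoming k)"
      using 1 in_nbrs_subset by (intro determined_by_incoming) (auto simp: in_nbrs_def)
    then have "determined_by primitive (primitive_index (ancestors k)) (incoming k)"
      by (rule determined_by_mono)
        (auto simp: primitive_index_def ancestors_def proper_ancestors_def)
    moreover have "determined_by primitive (primitive_index (ancestors k)) (z k)"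
      using determined_by_coordinate[of "Some k" "primitive_index (ancestors k)" primitive] relay
      by (simp add: primitive_index_def ancestors_def)
    ultimately show ?thesis
      unfolding x_relay[OF relay] by (intro determined_by_cmult determined_by_add)
  qed
qed

lemma indep_incoming_noise:
  assumes "k \<in> V - {S, D}"
  shows "indep_var borel (incoming k) borel (z k)"
proof (rule indep_var_if_determined_by_disjoint[OF indep_primitive])
  show "determined_by primitive (primitive_index (proper_ancestors k)) (incoming k)"
    using determined_by_x in_nbrs_subset by (intro determined_by_incoming) blast
  show "determined_by primitive {Some k} (z k)"
    using determined_by_coordinate[of "Some k" "{Some k}" primitive] by simp
qed (use assms noise_notin_proper_ancestors in
      \<open>auto simp: primitive_index_def proper_ancestors_def\<close>)

lemma square_integrable_incoming:
  "(\<And>j. j \<in> in_nbrs E k \<Longrightarrow> square_integrable (x j)) \<Longrightarrow> square_integrable (incoming k)"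
  unfolding incoming_def
  by (intro square_integrable_sum square_integrable_cmult finite_in_nbrs)

lemma square_integrable_x: "k \<in> V - {D} \<Longrightarrow> square_integrable (x k)"
proof (induction k rule: wf_induct_rule[OF wf_E])
  case (1 k)
  show ?case
  proof (cases "k = S")
    case True
    then show ?thesis using xS_meas xS_sq_int by (simp add: square_integrable_def)
  next
    case False
    with "1.prems" have relay: "k \<in> V - {S, D}" by blast
    have "square_integrable (incoming k)"
      using 1 in_nbrs_subset by (intro square_integrable_incoming) (auto simp: in_nbrs_def)
    moreover have "square_integrable (z k)"
      using noise_dist relay by (intro square_integrable_std_normal) auto
    ultimately show ?thesis
      unfolding x_relay[OF relay] by (intro square_integrable_cmult square_integrable_add)
  qed
qed

lemma P_R_pos:
  assumes "k \<in> V - {S, D}"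
  shows "P_R E h Pup k > 0"
proof -
  have "(\<Sum>j\<in>in_nbrs E k. h j k * sqrt (Pup j)) > 0"
  proof (rule sum_pos[OF finite_in_nbrs relay_in[OF assms]])
    fix j assume j: "j \<in> in_nbrs E k"
    then have "j \<in> V - {D}" using in_nbrs_subset by blast
    with j show "h j k * sqrt (Pup j) > 0"
      using Pup_pos h_pos by (simp add: in_nbrs_def)
  qed
  then show ?thesis by (simp add: P_R_def)
qed

lemma expectation_incoming_square_le:
  assumes Pj: "\<And>j. j \<in> in_nbrs E k \<Longrightarrow> expectation (\<lambda>\<omega>. (x j \<omega>)\<^sup>2) \<le> Pup j"
  shows "expectation (\<lambda>\<omega>. (incoming k \<omega>)\<^sup>2) \<le> P_R E h Pup k"
proof -
  have "sqrt (expectation (\<lambda>\<omega>. (incoming k \<omega>)\<^sup>2)) \<le>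
      (\<Sum>j\<in>in_nbrs E k. sqrt (expectation (\<lambda>\<omega>. (h j k * x j \<omega>)\<^sup>2)))"
    unfolding incoming_def using in_nbrs_subset
    by (intro sqrt_expectation_square_sum_le square_integrable_cmult square_integrable_x
        finite_in_nbrs) auto
  also have "\<dots> \<le> (\<Sum>j\<in>in_nbrs E k. h j k * sqrt (Pup j))"
  proof (rule sum_mono)
    fix j assume j: "j \<in> in_nbrs E k"
    then have "h j k > 0" using h_pos by (simp add: in_nbrs_def)
    then have "sqrt (expectation (\<lambda>\<omega>. (h j k * x j \<omega>)\<^sup>2)) =
        h j k * sqrt (expectation (\<lambda>\<omega>. (x j \<omega>)\<^sup>2))"
      by (simp add: power_mult_distrib real_sqrt_mult)
    with \<open>h j k > 0\<close> Pj[OF j]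
    show "sqrt (expectation (\<lambda>\<omega>. (h j k * x j \<omega>)\<^sup>2)) \<le> h j k * sqrt (Pup j)"
      by simp
  qed
  finally have "(sqrt (expectation (\<lambda>\<omega>. (incoming k \<omega>)\<^sup>2)))\<^sup>2 \<le> P_R E h Pup k"
    unfolding P_R_def by (rule power_mono) simp
  then show ?thesis by simp
qed

lemma expectation_x_square_le: "k \<in> V - {D} \<Longrightarrow> expectation (\<lambda>\<omega>. (x k \<omega>)\<^sup>2) \<le> Pup k"
proof (induction k rule: wf_induct_rule[OF wf_E])
  case (1 k)
  show ?case
  proof (cases "k = S")
    case True
    then show ?thesis using xS_pow by simp
  next
    case False
    with "1.prems" have relay: "k \<in> V - {S, D}" by blast
    have incoming: "expectation (\<lambda>\<omega>. (incoming k \<omega>)\<^sup>2) \<le> P_R E h Pup k"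
      using 1 in_nbrs_subset by (intro expectation_incoming_square_le) (auto simp: in_nbrs_def)
    have "(1 + delta E h Pup k) * P_R E h Pup k = P_R E h Pup k + 1"
      using P_R_pos[OF relay] by (simp add: delta_def field_simps)
    with gain[OF relay] have gain': "(\<beta> k)\<^sup>2 * (P_R E h Pup k + 1) \<le> Pup k"
      using P_R_pos[OF relay] by (simp add: pos_le_divide_eq)
    have "expectation (\<lambda>\<omega>. (x k \<omega>)\<^sup>2) =
        (\<beta> k)\<^sup>2 * expectation (\<lambda>\<omega>. (incoming k \<omega> + z k \<omega>)\<^sup>2)"
      by (simp add: x_relay[OF relay] power_mult_distrib)
    also have "\<dots> = (\<beta> k)\<^sup>2 * (expectation (\<lambda>\<omega>. (incoming k \<omega>)\<^sup>2) + 1)"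
      using relay noise_dist square_integrable_x in_nbrs_subset
      by (subst expectation_square_add_indep_std_normal[OF indep_incoming_noise[OF relay]])
        (auto intro!: square_integrable_incoming)
    also have "\<dots> \<le> (\<beta> k)\<^sup>2 * (P_R E h Pup k + 1)"
      using incoming by (simp add: mult_left_mono)
    finally show ?thesis using gain' by linarith
  qed
qed

end

theorem lemma1:
  fixes M :: "'w measure"
    and V :: "'a set" and E :: "('a \<times> 'a) set" and S D :: 'a
    and h :: "'a \<Rightarrow> 'a \<Rightarrow> real" and Pup :: "'a \<Rightarrow> real" and \<beta> :: "'a \<Rightarrow> real"
    and x y z :: "'a \<Rightarrow> 'w \<Rightarrow> real"
  assumes prob: "prob_space M"
    and finV: "finite V" and edges: "E \<subseteq> V \<times> V" and dag: "acyclic E"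
    and SV: "S \<in> V" and DV: "D \<in> V" and SD: "S \<noteq> D"
    and D_silent: "\<And>k. (D, k) \<notin> E"
    and h_pos: "\<And>j k. (j, k) \<in> E \<Longrightarrow> h j k > 0"
    and Pup_pos: "\<And>j. j \<in> V - {D} \<Longrightarrow> Pup j > 0"
    and relay_in: "\<And>k. k \<in> V - {S, D} \<Longrightarrow> in_nbrs E k \<noteq> {}"
    and xS_meas: "x S \<in> borel_measurable M"
    and xS_sq_int: "integrable M (\<lambda>\<omega>. (x S \<omega>)\<^sup>2)"
    and xS_mean: "prob_space.expectation M (x S) = 0"
    and xS_pow: "prob_space.expectation M (\<lambda>\<omega>. (x S \<omega>)\<^sup>2) \<le> Pup S"
    and noise_dist: "\<And>k. k \<in> V - {S} \<Longrightarrow>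
          distributed M lborel (z k) (\<lambda>t. ennreal (normal_density 0 1 t))"
    and indep: "prob_space.indep_vars M (\<lambda>_. borel)
          (\<lambda>i. case i of None \<Rightarrow> x S | Some k \<Rightarrow> z k) (insert None (Some ` (V - {S})))"
    and recv: "\<And>k. k \<in> V - {S} \<Longrightarrow>
          y k = (\<lambda>\<omega>. (\<Sum>j\<in>in_nbrs E k. h j k * x j \<omega>) + z k \<omega>)"
    and relay_tx: "\<And>k. k \<in> V - {S, D} \<Longrightarrow> x k = (\<lambda>\<omega>. \<beta> k * y k \<omega>)"
    and gain: "\<And>k. k \<in> V - {S, D} \<Longrightarrow>
          (\<beta> k)\<^sup>2 \<le> Pup k / ((1 + delta E h Pup k) * P_R E h Pup k)"
  shows "\<forall>k \<in> V - {S, D}. prob_space.expectation M (\<lambda>\<omega>. (x k \<omega>)\<^sup>2) \<le> Pup k"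
proof -
  interpret af_relay_network M V E S D h Pup \<beta> x y z
    by (rule af_relay_network.intro[OF prob af_relay_network_axioms.intro]) (fact assms)+
  show ?thesis using expectation_x_square_le by blast
qed

end
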